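(* For every $n\ge1$ and every subset $A\subseteq\{-1,1\}^n$, $$\Big\|\sum_{x\in A}x\Big\|_2\le 2^{n-1},$$ and equality holds when $A=\{x\in\{-1,1\}^n: x_i=c\}$ for some fixed coordinate $i$ and fixed sign $c\in\{-1,1\}$. *)

theory Defs
  imports "HOL-Analysis.Analysis"
begin

definition sign_cube :: "(real ^ 'n) set" where
  "sign_cube = {x. \<forall>i. x $ i = 1 \<or> x $ i = -1}"

end

theory Submission
  imports Defs
begin

text \<open>Let s be the sum of A and C the whole cube. Then
  |s|^2 = sum over A of <x,s> <= sum over C of max 0 <x,s> = 1/2 sum over C of |<x,s>|,
  the last step because C = -C. The coordinates are orthonormal for the uniform measure on C,
  so sum over C of <x,s>^2 = 2^n |s|^2, and Cauchy-Schwarz gives sum over C of |<x,s>| <= 2^n |s|;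
  hence |s| <= 2^(n-1). The indicator of a face x_i = c is (1 + c x_i)/2, so the same first and
  second moments show that the face sums to 2^(n-1) c e_i.\<close>

lemma sum_involution:
  assumes "\<And>x. x \<in> S \<Longrightarrow> g x \<in> S" and "\<And>x. x \<in> S \<Longrightarrow> g (g x) = x"
  shows "(\<Sum>x\<in>S. f (g x)) = (\<Sum>x\<in>S. f x)"
  by (rule sum.reindex_bij_witness[of S g g]) (use assms in auto)

lemma sum_eq_0_if_involution_antisym:
  fixes f :: "'a \<Rightarrow> 'b::real_vector"
  assumes "\<And>x. x \<in> S \<Longrightarrow> g x \<in> S" and "\<And>x. x \<in> S \<Longrightarrow> g (g x) = x"
    and "\<And>x. x \<in> S \<Longrightarrow> f (g x) = - f x"
  shows "sum f S = 0"
proof -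
  have "sum f S = (\<Sum>x\<in>S. f (g x))"
    using sum_involution[of S g f] assms(1,2) by simp
  also have "\<dots> = - sum f S"
    using assms(3) by (simp add: sum_negf)
  finally show ?thesis
    by (metis add_eq_0_iff2 scaleR_2 scale_eq_0_iff zero_neq_numeral)
qed

definition flip_sign :: "'n \<Rightarrow> real ^ 'n \<Rightarrow> real ^ 'n" where
  "flip_sign j x = (\<chi> k. if k = j then - x $ k else x $ k)"

lemma flip_sign_nth: "flip_sign j x $ k = (if k = j then - x $ k else x $ k)"
  by (simp add: flip_sign_def)

lemma flip_sign_flip_sign [simp]: "flip_sign j (flip_sign j x) = x"
  by (simp add: vec_eq_iff flip_sign_nth)

lemma flip_sign_in_sign_cube: "x \<in> sign_cube \<Longrightarrow> flip_sign j x \<in> sign_cube"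
  by (auto simp: sign_cube_def flip_sign_nth)

lemma uminus_in_sign_cube: "x \<in> sign_cube \<Longrightarrow> - x \<in> sign_cube"
  by (auto simp: sign_cube_def)

lemma sign_cube_component_square: "x \<in> sign_cube \<Longrightarrow> x $ i * x $ i = 1"
  by (auto simp: sign_cube_def dest: spec[of _ i])

lemma bij_betw_sign_cube_Pow:
  "bij_betw (\<lambda>x. {i. x $ i = 1}) (sign_cube :: (real ^ 'n) set) (Pow UNIV)"
proof (rule bij_betwI')
  fix x y :: "real ^ 'n"
  assume "x \<in> sign_cube" "y \<in> sign_cube"
  then show "({i. x $ i = 1} = {i. y $ i = 1}) = (x = y)"
    unfolding sign_cube_def vec_eq_iff by (auto simp: set_eq_iff) (metis one_neq_neg_one)+
next
  fix S :: "'n set"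
  have "(\<chi> i. if i \<in> S then (1::real) else -1) \<in> sign_cube"
    by (simp add: sign_cube_def)
  moreover have "S = {i. (\<chi> i. if i \<in> S then (1::real) else -1) $ i = 1}"
    by auto
  ultimately show "\<exists>x\<in>sign_cube. S = {i. x $ i = 1}"
    by blast
qed auto

lemma finite_sign_cube: "finite (sign_cube :: (real ^ 'n) set)"
  using bij_betw_finite[OF bij_betw_sign_cube_Pow] by simp

lemma card_sign_cube: "card (sign_cube :: (real ^ 'n) set) = 2 ^ CARD('n)"
  using bij_betw_same_card[OF bij_betw_sign_cube_Pow] by (simp add: card_Pow)

lemma card_sign_cube_eq_double: "real (card (sign_cube :: (real ^ 'n) set)) = 2 * 2 ^ (CARD('n) - 1)"
proof -
  have "CARD('n) = Suc (CARD('n) - 1)"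
    by simp
  then show ?thesis
    by (metis card_sign_cube of_nat_numeral of_nat_power power_Suc)
qed

lemma sum_sign_cube_component: "(\<Sum>x\<in>(sign_cube :: (real ^ 'n) set). x $ j) = 0"
  by (rule sum_eq_0_if_involution_antisym[where g = uminus]) (auto intro: uminus_in_sign_cube)

lemma sum_sign_cube_component_mult:
  "(\<Sum>x\<in>(sign_cube :: (real ^ 'n) set). x $ i * x $ j) =
     (if i = j then real (card (sign_cube :: (real ^ 'n) set)) else 0)"
proof (cases "i = j")
  case True
  then show ?thesis
    by (simp add: sign_cube_component_square)
next
  case False
  have "(\<Sum>x\<in>(sign_cube :: (real ^ 'n) set). x $ i * x $ j) = 0"
    by (rule sum_eq_0_if_involution_antisym[where g = "flip_sign j"])
      (use False in \<open>auto simp: flip_sign_nth intro: flip_sign_in_sign_cube\<close>)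
  with False show ?thesis
    by simp
qed

lemma sum_sign_cube_inner_square:
  fixes s :: "real ^ 'n"
  shows "(\<Sum>x\<in>(sign_cube :: (real ^ 'n) set). (x \<bullet> s)\<^sup>2) =
     real (card (sign_cube :: (real ^ 'n) set)) * (norm s)\<^sup>2"
proof -
  let ?C = "sign_cube :: (real ^ 'n) set"
  have "(\<Sum>x\<in>?C. (x \<bullet> s)\<^sup>2) = (\<Sum>x\<in>?C. \<Sum>i\<in>UNIV. \<Sum>j\<in>UNIV. s$i * s$j * (x$i * x$j))"
    by (simp add: inner_vec_def power2_eq_square sum_product algebra_simps)
  also have "\<dots> = (\<Sum>i\<in>UNIV. \<Sum>j\<in>UNIV. s$i * s$j * (\<Sum>x\<in>?C. x$i * x$j))"
    by (simp add: sum.swap[of _ ?C] sum_distrib_left)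
  also have "\<dots> = (\<Sum>i\<in>UNIV. s$i * s$i * real (card ?C))"
    by (simp add: sum_sign_cube_component_mult if_distrib[of "\<lambda>t. _ * t"] cong: if_cong)
  also have "\<dots> = real (card ?C) * (norm s)\<^sup>2"
    by (simp add: power2_norm_eq_inner inner_vec_def sum_distrib_left algebra_simps)
  finally show ?thesis .
qed

lemma sum_sign_cube_abs_inner_le:
  fixes s :: "real ^ 'n"
  shows "(\<Sum>x\<in>(sign_cube :: (real ^ 'n) set). \<bar>x \<bullet> s\<bar>) \<le> real (card (sign_cube :: (real ^ 'n) set)) * norm s"
proof (rule power2_le_imp_le)
  let ?C = "sign_cube :: (real ^ 'n) set"
  have "(\<Sum>x\<in>?C. \<bar>x \<bullet> s\<bar>)\<^sup>2 \<le> (\<Sum>x\<in>?C. \<bar>x \<bullet> s\<bar>\<^sup>2) * card ?C"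
    by (rule sum_squared_le_sum_of_squares)
  also have "\<dots> = (real (card ?C) * norm s)\<^sup>2"
    using sum_sign_cube_inner_square[of s] by (simp add: power_mult_distrib power2_eq_square)
  finally show "(\<Sum>x\<in>?C. \<bar>x \<bullet> s\<bar>)\<^sup>2 \<le> (real (card ?C) * norm s)\<^sup>2" .
qed simp

lemma sum_sign_cube_pos_part_inner:
  fixes s :: "real ^ 'n"
  shows "2 * (\<Sum>x\<in>(sign_cube :: (real ^ 'n) set). max 0 (x \<bullet> s)) =
    (\<Sum>x\<in>(sign_cube :: (real ^ 'n) set). \<bar>x \<bullet> s\<bar>)"
proof -
  let ?C = "sign_cube :: (real ^ 'n) set"
  have "(\<Sum>x\<in>?C. max 0 (- x \<bullet> s)) = (\<Sum>x\<in>?C. max 0 (x \<bullet> s))"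
    by (rule sum_involution) (auto intro: uminus_in_sign_cube)
  then have "2 * (\<Sum>x\<in>?C. max 0 (x \<bullet> s)) = (\<Sum>x\<in>?C. max 0 (x \<bullet> s) + max 0 (- (x \<bullet> s)))"
    by (simp add: sum.distrib)
  also have "\<dots> = (\<Sum>x\<in>?C. \<bar>x \<bullet> s\<bar>)"
    by (rule sum.cong) auto
  finally show ?thesis .
qed

lemma norm_sum_subset_sign_cube_le:
  fixes A :: "(real ^ 'n) set"
  assumes "A \<subseteq> sign_cube"
  shows "norm (\<Sum>x\<in>A. x) \<le> 2 ^ (CARD('n) - 1)"
proof -
  let ?C = "sign_cube :: (real ^ 'n) set"
  define s where "s = (\<Sum>x\<in>A. x)"
  have "norm s * norm s = (\<Sum>x\<in>A. x \<bullet> s)"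
    by (simp add: s_def inner_sum_left flip: power2_eq_square dot_square_norm)
  also have "\<dots> \<le> (\<Sum>x\<in>A. max 0 (x \<bullet> s))"
    by (rule sum_mono) simp
  also have "\<dots> \<le> (\<Sum>x\<in>?C. max 0 (x \<bullet> s))"
    by (rule sum_mono2[OF finite_sign_cube assms]) simp
  also have "\<dots> \<le> 2 ^ (CARD('n) - 1) * norm s"
    using sum_sign_cube_pos_part_inner[of s] sum_sign_cube_abs_inner_le[of s]
    by (simp add: card_sign_cube_eq_double)
  finally show ?thesis
    unfolding s_def[symmetric]
    by (metis mult_right_le_imp_le norm_ge_zero order_le_less zero_le_power zero_le_numeral)
qed

lemma sign_cube_indicator:
  assumes "x \<in> sign_cube" and "c = 1 \<or> c = -1"
  shows "of_bool (x $ i = c) = (1 + c * x $ i) / 2"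
  using assms by (auto simp: sign_cube_def dest: spec[of _ i])

lemma sum_sign_cube_face:
  assumes "c = 1 \<or> c = -1"
  shows "(\<Sum>x\<in>{x \<in> (sign_cube :: (real ^ 'n) set). x $ i = c}. x) =
    (c * 2 ^ (CARD('n) - 1)) *\<^sub>R axis i 1"
proof -
  let ?C = "sign_cube :: (real ^ 'n) set"
  have "(\<Sum>x\<in>{x \<in> ?C. x $ i = c}. x $ j) = (if j = i then c * 2 ^ (CARD('n) - 1) else 0)" for j
  proof -
    have "(\<Sum>x\<in>{x \<in> ?C. x $ i = c}. x $ j) = (\<Sum>x\<in>?C. of_bool (x $ i = c) * x $ j)"
      by (simp add: sum.inter_filter[OF finite_sign_cube]) (rule sum.cong, simp_all)
    also have "\<dots> = (\<Sum>x\<in>?C. x $ j) / 2 + c / 2 * (\<Sum>x\<in>?C. x $ i * x $ j)"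
      by (simp add: sign_cube_indicator[OF _ assms] sum_divide_distrib sum_distrib_left
          sum.distrib[symmetric] algebra_simps add_divide_distrib)
    also have "\<dots> = (if j = i then c * 2 ^ (CARD('n) - 1) else 0)"
      by (simp add: sum_sign_cube_component sum_sign_cube_component_mult card_sign_cube_eq_double)
    finally show ?thesis .
  qed
  then show ?thesis
    by (simp add: vec_eq_iff axis_def sum_component)
qed

theorem theorem5:
  fixes A :: "(real ^ 'n) set"
  assumes "A \<subseteq> sign_cube"
  shows "norm (\<Sum>x\<in>A. x) \<le> 2 ^ (CARD('n) - 1) \<and>
         (\<forall>i c. (c = 1 \<or> c = -1) \<longrightarrow>
           norm (\<Sum>x\<in>{x \<in> (sign_cube :: (real ^ 'n) set). x $ i = c}. x) = 2 ^ (CARD('n) - 1))"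
proof (intro conjI allI impI)
  show "norm (\<Sum>x\<in>A. x) \<le> 2 ^ (CARD('n) - 1)"
    using assms by (rule norm_sum_subset_sign_cube_le)
next
  fix i and c :: real
  assume "c = 1 \<or> c = -1"
  then show "norm (\<Sum>x\<in>{x \<in> (sign_cube :: (real ^ 'n) set). x $ i = c}. x) = 2 ^ (CARD('n) - 1)"
    by (auto simp: sum_sign_cube_face)
qed

end
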